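(* Let $n,d\ge1$, let $\mathcal{S}$ be a subspace of $\mathbb{R}^{nd}$, let $\lambda_-\le\lambda_+$ be in $(-1,1)$, and let $I=\{1,\dots,K\}$. A set of pairs $\{(\mathbf{x}^k,\mathbf{y}^k)\}_{k\in I}$ with $\mathbf{x}^k,\mathbf{y}^k\in\mathbb{R}^{nd}$ is $\mathcal{M}^{\mathcal{S}}_{\lambda_-,\lambda_+}$-interpolable, i.e. there exists $M\in\mathcal{M}^{\mathcal{S}}_{\lambda_-,\lambda_+}$ with $\mathbf{y}^k=M\mathbf{x}^k$ for all $k\in I$, if and only if $$\bar X=\bar Y,\qquad (Y_\perp-\lambda_-X_\perp)^T(Y_\perp-\lambda_+X_\perp)\preceq 0,\qquad X_\perp^TY_\perp=Y_\perp^TX_\perp,$$ where $X=[\mathbf{x}^1\dots\mathbf{x}^K]$, $Y=[\mathbf{y}^1\dots\mathbf{y}^K]\in\mathbb{R}^{nd\times K}$, $\bar X,\bar Y$ are obtained by orthogonally projecting each column of $X,Y$ onto $\mathcal{S}$, and $X_\perp=X-\bar X$, $Y_\perp=Y-\bar Y$ are the projections onto the orthogonal complement $\mathcal{S}^\perp$.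
   Context: $\mathcal{M}^{\mathcal{S}}_{\lambda_-,\lambda_+}$ is the set of symmetric matrices $M\in\mathbb{R}^{nd\times nd}$ such that $\lambda_1(M)=\dots=\lambda_{|\mathcal{S}|}(M)=1$ with corresponding eigenvectors forming a basis of $\mathcal{S}$ (where $|\mathcal{S}|$ is the dimension of $\mathcal{S}$), and the remaining eigenvalues satisfy $\lambda_-\le\lambda_{nd}(M)\le\dots\le\lambda_{|\mathcal{S}|+1}(M)\le\lambda_+$. *)

theory Defs
  imports "HOL-Analysis.Analysis"
begin

definition orth_proj :: "(real^'n) set \<Rightarrow> real^'n \<Rightarrow> real^'n" where
  "orth_proj S x = (THE p. p \<in> S \<and> x - p \<in> orthogonal_comp S)"

definition proj_cols :: "(real^'n) set \<Rightarrow> real^'k^'n \<Rightarrow> real^'k^'n" where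
  "proj_cols S X = (\<chi> i k. orth_proj S (column k X) $ i)"

definition neg_semidef :: "real^'k^'k \<Rightarrow> bool" where
  "neg_semidef A \<longleftrightarrow> (\<forall>v. v \<bullet> (A *v v) \<le> 0)"

text \<open>The class M^S_{lm,lp}: symmetric matrices whose eigenvalues (with multiplicity,
  read off an eigenbasis v_i with eigenvalues mu_i) consist of dim S copies of 1,
  whose eigenvectors form a basis of S, and the remaining ones lie in [lm, lp].\<close>
definition M_class :: "(real^'n) set \<Rightarrow> real \<Rightarrow> real \<Rightarrow> real^'n^'n \<Rightarrow> bool" where
  "M_class S lm lp M \<longleftrightarrow> transpose M = M \<and>
     (\<exists>(v :: 'n \<Rightarrow> real^'n) (mu :: 'n \<Rightarrow> real) (J :: 'n set).
        inj v \<and> independent (range v) \<and> span (range v) = UNIV \<and>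
        (\<forall>i. M *v v i = mu i *\<^sub>R v i) \<and>
        card J = dim S \<and> independent (v ` J) \<and> span (v ` J) = S \<and>
        (\<forall>i\<in>J. mu i = 1) \<and>
        (\<forall>i. i \<notin> J \<longrightarrow> lm \<le> mu i \<and> mu i \<le> lp))"

definition interpolable :: "(real^'n) set \<Rightarrow> real \<Rightarrow> real \<Rightarrow> real^'k^'n \<Rightarrow> real^'k^'n \<Rightarrow> bool" where
  "interpolable S lm lp X Y \<longleftrightarrow>
     (\<exists>M. M_class S lm lp M \<and> (\<forall>k. column k Y = M *v column k X))"

end

theory Submission
  imports Defs
begin

text \<open>
  Let W be the orthogonal complement of S, and P, R the W-components of X, Y. A matrix M of
  the class fixes S and, being symmetric, leaves W invariant; by the spectral theorem its
  eigenvalues on W lie in [lm, lp] exactly when (M w - lm w) \<bullet> (M w - lp w) \<le> 0 on W.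
  Since R = M P, this gives the three conditions.

  Conversely, for lm < lp put Y0 = (R - lm P) / (lp - lm). The conditions say that G = P^T Y0
  is symmetric and dominates Y0^T Y0, so Q = Y0 G^+ Y0^T is a symmetric contraction
  (0 \<le> Q \<le> I) with Q P = Y0 and Q S = 0 (for lm = lp, R = lm P and Q = 0 will do).
  Then the orthogonal projection onto S plus lm (I - projection) + (lp - lm) Q belongs to the
  class and maps X to Y.
\<close>

lemma inner_matrix_vector_transpose:
  fixes A :: "real^'m^'n"
  shows "(A *v x) \<bullet> y = x \<bullet> (transpose A *v y)"
  by (metis dot_lmul_matrix inner_commute transpose_transpose vector_transpose_matrix)

lemma inner_transpose_matrix_mult:
  fixes A B :: "real^'k^'n"
  shows "x \<bullet> ((transpose A ** B) *v y) = (A *v x) \<bullet> (B *v y)"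
  by (simp add: inner_matrix_vector_transpose matrix_vector_mul_assoc[symmetric])

lemma symmetric_matrix_iff_inner:
  fixes A :: "real^'n^'n"
  shows "transpose A = A \<longleftrightarrow> (\<forall>x y. (A *v x) \<bullet> y = x \<bullet> (A *v y))"
proof -
  have "transpose A = A \<longleftrightarrow> (\<forall>y x. x \<bullet> (transpose A *v y) = x \<bullet> (A *v y))"
    by (simp only: matrix_eq vector_eq_ldot)
  then show ?thesis
    by (metis inner_matrix_vector_transpose inner_commute)
qed

lemma symmetric_matrix_self_adjoint:
  fixes M :: "real^'n^'n"
  assumes "transpose M = M"
  shows "(M *v x) \<bullet> y = x \<bullet> (M *v y)"
  using assms symmetric_matrix_iff_inner by blast

lemma transpose_mult_symmetric_iff:
  fixes A B :: "real^'k^'n"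
  shows "transpose A ** B = transpose B ** A \<longleftrightarrow> (\<forall>x y. (A *v x) \<bullet> (B *v y) = (B *v x) \<bullet> (A *v y))"
proof -
  have "transpose A ** B = transpose B ** A \<longleftrightarrow>
      (\<forall>y x. x \<bullet> ((transpose A ** B) *v y) = x \<bullet> ((transpose B ** A) *v y))"
    by (simp only: matrix_eq vector_eq_ldot)
  then show ?thesis
    by (auto simp: inner_transpose_matrix_mult)
qed

lemma neg_semidef_transpose_mult_iff:
  fixes A B :: "real^'k^'n"
  shows "neg_semidef (transpose A ** B) \<longleftrightarrow> (\<forall>x. (A *v x) \<bullet> (B *v x) \<le> 0)"
  by (simp add: neg_semidef_def inner_transpose_matrix_mult)

lemma columns_eq_iff_matrix_mult:
  fixes X Y :: "real^'k^'n" and M :: "real^'n^'n"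
  shows "(\<forall>k. column k Y = M *v column k X) \<longleftrightarrow> Y = M ** X"
proof -
  have "column k (M ** X) = M *v column k X" for k
    by (metis matrix_vector_mult_basis matrix_vector_mul_assoc)
  moreover have "Y = Z \<longleftrightarrow> (\<forall>k. column k Y = column k Z)" for Z :: "real^'k^'n"
    by (auto simp: column_def vec_eq_iff)
  ultimately show ?thesis by metis
qed

section \<open>Orthogonal complement and projection\<close>

lemma orthogonal_comp_inner:
  assumes "s \<in> S" "w \<in> orthogonal_comp S"
  shows "s \<bullet> w = 0" and "w \<bullet> s = 0"
  using assms by (auto simp: orthogonal_comp_def orthogonal_def inner_commute)

lemma transpose_matrix_vector_orthogonal_comp:
  fixes Y :: "real^'k^'n"
  assumes "\<And>u. Y *v u \<in> orthogonal_comp S" and "s \<in> S"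
  shows "transpose Y *v s = 0"
proof -
  have "v \<bullet> (transpose Y *v s) = v \<bullet> 0" for v
    using orthogonal_comp_inner(2)[OF assms(2,1)]
    by (simp only: inner_matrix_vector_transpose[symmetric] inner_zero_right)
  then show ?thesis
    using vector_eq_ldot by blast
qed

lemma orthogonal_basis_Un_orthogonal_comp:
  fixes S :: "'a::euclidean_space set"
  assumes S: "subspace S"
    and A: "A \<subseteq> S" "pairwise orthogonal A" "span A = S"
    and B: "B \<subseteq> orthogonal_comp S" "pairwise orthogonal B" "span B = orthogonal_comp S"
  shows "pairwise orthogonal (A \<union> B)" and "span (A \<union> B) = UNIV"
proof -
  have "orthogonal x y" if "x \<in> A" "y \<in> B" for x y
    using orthogonal_comp_inner[of x S y] that A(1) B(1) unfolding orthogonal_def by blast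
  then show "pairwise orthogonal (A \<union> B)"
    using A(2) B(2) unfolding pairwise_def by (blast intro: orthogonal_commute[THEN iffD1])
  have "span (A \<union> B) = S + orthogonal_comp S"
    unfolding span_Un A(3) B(3) set_plus_def by blast
  then show "span (A \<union> B) = UNIV"
    using subspace_sum_orthogonal_comp[OF S] by simp
qed

lemma orth_proj_eqI:
  fixes S :: "(real^'n) set"
  assumes S: "subspace S" and p: "p \<in> S" "x - p \<in> orthogonal_comp S"
  shows "orth_proj S x = p"
  unfolding orth_proj_def
proof (rule the_equality)
  fix q assume q: "q \<in> S \<and> x - q \<in> orthogonal_comp S"
  have "q - p \<in> S"
    using q p(1) by (simp add: subspace_diff[OF S])
  moreover have "q - p \<in> orthogonal_comp S"
    using subspace_diff[OF subspace_orthogonal_comp p(2) conjunct2[OF q]] by simp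
  ultimately have "q - p \<in> S \<inter> orthogonal_comp S"
    by blast
  then show "q = p"
    unfolding orthogonal_Int_0[OF S] by simp
qed (use p in simp)

lemma orth_proj_mem:
  fixes S :: "(real^'n) set"
  assumes S: "subspace S"
  shows "orth_proj S x \<in> S" and "x - orth_proj S x \<in> orthogonal_comp S"
proof -
  obtain p w where "x = p + w" "p \<in> S" "w \<in> orthogonal_comp S"
    using subspace_sum_orthogonal_comp[OF S] set_plus_elim by (metis UNIV_I)
  then have "orth_proj S x = p"
    by (intro orth_proj_eqI[OF S]) auto
  with \<open>x = p + w\<close> \<open>p \<in> S\<close> \<open>w \<in> orthogonal_comp S\<close>
  show "orth_proj S x \<in> S" and "x - orth_proj S x \<in> orthogonal_comp S"
    by auto
qed

lemma orth_proj_id: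
  fixes S :: "(real^'n) set"
  assumes "subspace S" "s \<in> S"
  shows "orth_proj S s = s"
  using assms subspace_0[OF subspace_orthogonal_comp] by (intro orth_proj_eqI) auto

lemma orth_proj_orthogonal_comp:
  fixes S :: "(real^'n) set"
  assumes "subspace S" "w \<in> orthogonal_comp S"
  shows "orth_proj S w = 0"
  using assms subspace_0 by (intro orth_proj_eqI) auto

lemma linear_orth_proj:
  fixes S :: "(real^'n) set"
  assumes S: "subspace S"
  shows "linear (orth_proj S)"
proof
  fix x y :: "real^'n" and c :: real
  note mem = orth_proj_mem[OF S]
  have "(x - orth_proj S x) + (y - orth_proj S y) \<in> orthogonal_comp S"
    using mem by (simp add: subspace_add subspace_orthogonal_comp)
  then show "orth_proj S (x + y) = orth_proj S x + orth_proj S y"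
    using mem by (intro orth_proj_eqI[OF S]) (simp_all add: add_diff_add subspace_add[OF S])
  have "c *\<^sub>R (x - orth_proj S x) \<in> orthogonal_comp S"
    using mem by (simp add: subspace_scale subspace_orthogonal_comp)
  then show "orth_proj S (c *\<^sub>R x) = c *\<^sub>R orth_proj S x"
    using mem by (intro orth_proj_eqI[OF S])
      (simp_all add: scaleR_right_diff_distrib subspace_scale[OF S])
qed

lemma orth_proj_self_adjoint:
  fixes S :: "(real^'n) set"
  assumes S: "subspace S"
  shows "orth_proj S x \<bullet> y = x \<bullet> orth_proj S y"
proof -
  note mem = orth_proj_mem[OF S]
  have "orth_proj S x \<bullet> (y - orth_proj S y) = 0" "orth_proj S y \<bullet> (x - orth_proj S x) = 0"
    using mem orthogonal_comp_inner by blast+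
  then show ?thesis
    by (simp add: inner_diff_right inner_commute)
qed

lemma matrix_vector_mult_proj_cols:
  fixes S :: "(real^'n) set" and X :: "real^'k^'n"
  assumes S: "subspace S"
  shows "proj_cols S X *v u = orth_proj S (X *v u)"
proof -
  have lin: "linear (orth_proj S)"
    using linear_orth_proj[OF S] .
  have "X *v u = (\<Sum>i\<in>UNIV. u $ i *\<^sub>R column i X)"
    by (simp add: matrix_mult_sum scalar_mult_eq_scaleR)
  then have "orth_proj S (X *v u) = (\<Sum>i\<in>UNIV. u $ i *\<^sub>R orth_proj S (column i X))"
    by (simp add: linear_sum[OF lin] linear_scale[OF lin])
  then show ?thesis
    by (simp add: proj_cols_def matrix_vector_mult_def vec_eq_iff sum_component mult.commute)
qed

section \<open>Spectral theory of self-adjoint maps\<close>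

lemma zero_if_linear_le_quadratic:
  fixes d C :: real
  assumes "\<And>t. 2 * t * d \<le> t * t * C"
  shows "d = 0"
proof (rule ccontr)
  assume "d \<noteq> 0"
  define t where "t = d / (\<bar>C\<bar> + 1)"
  have d: "d = t * (\<bar>C\<bar> + 1)"
    unfolding t_def by simp
  have "(t * t) * (2 * (\<bar>C\<bar> + 1)) \<le> (t * t) * C"
    using assms[of t] unfolding d by (simp add: algebra_simps)
  moreover have "t * t > 0"
    using \<open>d \<noteq> 0\<close> d by (auto simp: zero_less_mult_iff linorder_neq_iff)
  ultimately show False
    by (simp add: mult_le_cancel_left_pos)
qed

lemma rayleigh_quotient_attains_max:
  fixes f :: "'a::euclidean_space \<Rightarrow> 'a"
  assumes lin: "linear f" and W: "subspace W" and nontriv: "W \<noteq> {0}"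
  obtains u where "u \<in> W" "u \<bullet> u = 1" "\<And>y. y \<in> W \<Longrightarrow> y \<bullet> f y \<le> (u \<bullet> f u) * (y \<bullet> y)"
proof -
  define K where "K = W \<inter> sphere 0 1"
  have "compact K"
    unfolding K_def using closed_subspace[OF W] by (simp add: closed_Int_compact)
  obtain w where w: "w \<in> W" "w \<noteq> 0"
    using nontriv subspace_0[OF W] by blast
  then have "w /\<^sub>R norm w \<in> K"
    unfolding K_def by (simp add: subspace_scale[OF W])
  then have "K \<noteq> {}"
    by blast
  have "continuous_on K (\<lambda>x. x \<bullet> f x)"
    using linear_continuous_on lin linear_conv_bounded_linear
    by (intro continuous_intros) blast
  then obtain u where u: "u \<in> K" and umax: "\<And>y. y \<in> K \<Longrightarrow> y \<bullet> f y \<le> u \<bullet> f u"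
    using continuous_attains_sup[OF \<open>compact K\<close> \<open>K \<noteq> {}\<close>] by blast
  have "y \<bullet> f y \<le> (u \<bullet> f u) * (y \<bullet> y)" if "y \<in> W" for y
  proof (cases "y = 0")
    case False
    then have "y /\<^sub>R norm y \<in> K"
      unfolding K_def using that by (simp add: subspace_scale[OF W])
    then have "(y /\<^sub>R norm y) \<bullet> f (y /\<^sub>R norm y) \<le> u \<bullet> f u"
      by (rule umax)
    then have "(y \<bullet> f y) / (norm y)\<^sup>2 \<le> u \<bullet> f u"
      by (simp add: linear_scale[OF lin] power2_eq_square divide_inverse
          mult.commute mult.left_commute)
    then show ?thesis
      using False by (simp add: divide_le_eq power2_norm_eq_inner)
  qed (simp add: linear_0[OF lin])
  moreover have "u \<in> W" "u \<bullet> u = 1"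
    using u unfolding K_def by (auto simp: norm_eq_1)
  ultimately show ?thesis
    using that by blast
qed

lemma self_adjoint_eigenvector_in_invariant_subspace:
  fixes f :: "'a::euclidean_space \<Rightarrow> 'a"
  assumes lin: "linear f" and adj: "\<And>x y. f x \<bullet> y = x \<bullet> f y"
    and W: "subspace W" and inv: "f ` W \<subseteq> W" and nontriv: "W \<noteq> {0}"
  obtains u \<mu> where "u \<in> W" "u \<noteq> 0" "f u = \<mu> *\<^sub>R u"
proof -
  obtain u where uW: "u \<in> W" and uu: "u \<bullet> u = 1"
    and rayleigh: "\<And>y. y \<in> W \<Longrightarrow> y \<bullet> f y \<le> (u \<bullet> f u) * (y \<bullet> y)"
    using rayleigh_quotient_attains_max[OF lin W nontriv] by blast
  define l where "l = u \<bullet> f u"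
  \<comment> \<open>first-order condition at the maximiser u of the Rayleigh quotient\<close>
  have orth: "w \<bullet> f u = 0" if wW: "w \<in> W" and wu: "w \<bullet> u = 0" for w
  proof (rule zero_if_linear_le_quadratic[where C = "l * (w \<bullet> w) - w \<bullet> f w"])
    fix t :: real
    have "u + t *\<^sub>R w \<in> W"
      using uW wW by (simp add: subspace_add[OF W] subspace_scale[OF W])
    then have "(u + t *\<^sub>R w) \<bullet> f (u + t *\<^sub>R w) \<le> l * ((u + t *\<^sub>R w) \<bullet> (u + t *\<^sub>R w))"
      unfolding l_def by (rule rayleigh)
    moreover have "u \<bullet> f w = w \<bullet> f u"
      using adj[of u w] by (simp add: inner_commute)
    ultimately show "2 * t * (w \<bullet> f u) \<le> t * t * (l * (w \<bullet> w) - w \<bullet> f w)"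
      using uu wu
      by (simp add: linear_add[OF lin] linear_scale[OF lin] inner_add_left inner_add_right
          inner_commute[of u w] inner_commute[of "f u" w] l_def algebra_simps)
  qed
  define r where "r = f u - l *\<^sub>R u"
  have "r \<in> W"
    unfolding r_def using inv uW by (auto simp: subspace_diff[OF W] subspace_scale[OF W])
  moreover have "r \<bullet> u = 0"
    unfolding r_def using uu by (simp add: inner_diff_left inner_commute[of "f u" u] l_def)
  ultimately have "r \<bullet> f u = 0"
    by (rule orth)
  then have "r \<bullet> r = 0"
    using \<open>r \<bullet> u = 0\<close> unfolding r_def by (simp add: inner_diff_right)
  then have "f u = l *\<^sub>R u"
    unfolding r_def by simp
  moreover have "u \<noteq> 0"
    using uu by auto
  ultimately show ?thesis
    using that uW by blast
qed

lemma span_insert_orthogonal_slice: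
  fixes u :: "'a::real_inner"
  assumes W: "subspace W" and u: "u \<in> W" "u \<noteq> 0" and B: "span B = {w \<in> W. u \<bullet> w = 0}"
  shows "span (insert u B) = W"
proof
  show "span (insert u B) \<subseteq> W"
    using u B span_superset[of B] W by (intro span_minimal) auto
  show "W \<subseteq> span (insert u B)"
  proof
    fix w assume "w \<in> W"
    define c where "c = (u \<bullet> w) / (u \<bullet> u)"
    have "w - c *\<^sub>R u \<in> span B"
      unfolding B c_def using \<open>w \<in> W\<close> u W
      by (simp add: subspace_diff subspace_scale inner_diff_right)
    then show "w \<in> span (insert u B)"
      unfolding span_insert by blast
  qed
qed

lemma self_adjoint_orthogonal_eigenbasis:
  fixes f :: "'a::euclidean_space \<Rightarrow> 'a"
  assumes lin: "linear f" and adj: "\<And>x y. f x \<bullet> y = x \<bullet> f y"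
    and "subspace W" "f ` W \<subseteq> W"
  shows "\<exists>B. B \<subseteq> W \<and> pairwise orthogonal B \<and> 0 \<notin> B \<and> span B = W \<and> (\<forall>v\<in>B. \<exists>\<mu>. f v = \<mu> *\<^sub>R v)"
  using assms(3,4)
proof (induction "dim W" arbitrary: W rule: less_induct)
  case less
  show ?case
  proof (cases "W = {0}")
    case True
    then show ?thesis
      by (intro exI[of _ "{}"]) auto
  next
    case False
    then obtain u \<mu> where u: "u \<in> W" "u \<noteq> 0" "f u = \<mu> *\<^sub>R u"
      using self_adjoint_eigenvector_in_invariant_subspace[OF lin adj less.prems] by blast
    define W' where "W' = {w \<in> W. u \<bullet> w = 0}"
    have W': "subspace W'"
      unfolding W'_def using less.prems(1) by (auto simp: subspace_def inner_add_right)
    have "f ` W' \<subseteq> W'"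
    proof
      fix y assume "y \<in> f ` W'"
      then obtain w where w: "w \<in> W" "u \<bullet> w = 0" "y = f w"
        unfolding W'_def by auto
      moreover have "u \<bullet> f w = \<mu> * (u \<bullet> w)"
        using adj[of u w] u(3) by simp
      ultimately show "y \<in> W'"
        unfolding W'_def using less.prems(2) by auto
    qed
    have "u \<notin> W'"
      using u unfolding W'_def by simp
    with u(1) have "W' \<subset> W"
      unfolding W'_def by blast
    then have "dim W' < dim W"
      using dim_psubset W' less.prems(1) by (metis span_eq_iff)
    then obtain B where B: "B \<subseteq> W'" "pairwise orthogonal B" "0 \<notin> B" "span B = W'"
      "\<forall>v\<in>B. \<exists>\<mu>. f v = \<mu> *\<^sub>R v"
      using less.hyps W' \<open>f ` W' \<subseteq> W'\<close> by blast
    have "span (insert u B) = W"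
      using span_insert_orthogonal_slice[OF less.prems(1) u(1,2)] B(4) unfolding W'_def by blast
    with u B show ?thesis
      unfolding W'_def
      by (intro exI[of _ "insert u B"]) (auto simp: pairwise_insert orthogonal_def inner_commute)
  qed
qed

lemma self_adjoint_orthogonal_comp_invariant:
  fixes f :: "'a::euclidean_space \<Rightarrow> 'a"
  assumes adj: "\<And>x y. f x \<bullet> y = x \<bullet> f y" and inv: "f ` S \<subseteq> S"
  shows "f ` orthogonal_comp S \<subseteq> orthogonal_comp S"
proof -
  have "s \<bullet> f w = 0" if "s \<in> S" "w \<in> orthogonal_comp S" for s w
    using adj[of s w] inv that orthogonal_comp_inner[of "f s" S w] by auto
  then show ?thesis
    by (auto simp: orthogonal_comp_def orthogonal_def)
qed

lemma inner_sum_pairwise_orthogonal: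
  fixes B :: "'a::real_inner set"
  assumes "pairwise orthogonal B"
  shows "(\<Sum>b\<in>B. c b *\<^sub>R b) \<bullet> (\<Sum>b\<in>B. d b *\<^sub>R b) = (\<Sum>b\<in>B. c b * d b * (b \<bullet> b))"
proof -
  have "(\<Sum>b\<in>B. c b *\<^sub>R b) \<bullet> (\<Sum>b\<in>B. d b *\<^sub>R b) = (\<Sum>b\<in>B. \<Sum>b'\<in>B. c b' * d b * (b' \<bullet> b))"
    by (simp add: inner_sum_left inner_sum_right sum_distrib_left sum_distrib_right
        mult.assoc mult.left_commute)
  also have "\<dots> = (\<Sum>b\<in>B. \<Sum>b'\<in>B. if b' = b then c b * d b * (b \<bullet> b) else 0)"
    using assms by (intro sum.cong refl) (auto simp: pairwise_def orthogonal_def)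
  also have "\<dots> = (\<Sum>b\<in>B. c b * d b * (b \<bullet> b))"
    by (cases "finite B") simp_all
  finally show ?thesis .
qed

lemma self_adjoint_quadratic_nonpos:
  fixes f :: "'a::euclidean_space \<Rightarrow> 'a"
  assumes lin: "linear f" and adj: "\<And>x y. f x \<bullet> y = x \<bullet> f y"
    and W: "subspace W" and inv: "f ` W \<subseteq> W"
    and eig: "\<And>w \<mu>. w \<in> W \<Longrightarrow> w \<noteq> 0 \<Longrightarrow> f w = \<mu> *\<^sub>R w \<Longrightarrow> a \<le> \<mu> \<and> \<mu> \<le> b"
    and "w \<in> W"
  shows "(f w - a *\<^sub>R w) \<bullet> (f w - b *\<^sub>R w) \<le> 0"
proof -
  obtain B where B: "B \<subseteq> W" "pairwise orthogonal B" "0 \<notin> B" "span B = W"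
    and "\<forall>v\<in>B. \<exists>\<mu>. f v = \<mu> *\<^sub>R v"
    using self_adjoint_orthogonal_eigenbasis[OF lin adj W inv] by blast
  then obtain \<mu> where \<mu>: "\<And>v. v \<in> B \<Longrightarrow> f v = \<mu> v *\<^sub>R v"
    by metis
  have \<mu>_bounds: "a \<le> \<mu> v \<and> \<mu> v \<le> b" if "v \<in> B" for v
    using eig \<mu> B(1,3) that by blast
  have "finite B"
    using pairwise_orthogonal_imp_finite[OF B(2)] .
  then obtain c where c: "w = (\<Sum>v\<in>B. c v *\<^sub>R v)"
    using \<open>w \<in> W\<close> span_finite[of B] B(4) by auto
  have expand: "f w - t *\<^sub>R w = (\<Sum>v\<in>B. (c v * (\<mu> v - t)) *\<^sub>R v)" for t
    unfolding c
    by (simp add: linear_sum[OF lin] linear_scale[OF lin] \<mu> scaleR_sum_right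
        sum_subtractf[symmetric] algebra_simps cong: sum.cong)
  have "(f w - a *\<^sub>R w) \<bullet> (f w - b *\<^sub>R w) = (\<Sum>v\<in>B. (c v)\<^sup>2 * (v \<bullet> v) * ((\<mu> v - a) * (\<mu> v - b)))"
    unfolding expand inner_sum_pairwise_orthogonal[OF B(2)]
    by (simp add: power2_eq_square algebra_simps)
  also have "\<dots> \<le> 0"
    using \<mu>_bounds by (intro sum_nonpos mult_nonneg_nonpos) (auto simp: mult_nonneg_nonpos)
  finally show ?thesis .
qed

section \<open>Eigenvalue description of the class\<close>

lemma M_classD:
  fixes S :: "(real^'n) set"
  assumes "M_class S a b M"
  shows M_class_symmetric: "transpose M = M"
    and M_class_fixes: "\<And>s. s \<in> S \<Longrightarrow> M *v s = s"
    and M_class_eigenvalue_bounds: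
      "\<And>w \<mu>. w \<in> orthogonal_comp S \<Longrightarrow> w \<noteq> 0 \<Longrightarrow> M *v w = \<mu> *\<^sub>R w \<Longrightarrow> a \<le> \<mu> \<and> \<mu> \<le> b"
proof -
  show sym: "transpose M = M"
    using assms unfolding M_class_def by blast
  obtain v :: "'n \<Rightarrow> real^'n" and mu J where v: "span (range v) = UNIV"
    "\<And>i. M *v v i = mu i *\<^sub>R v i" "span (v ` J) = S" "\<And>i. i \<in> J \<Longrightarrow> mu i = 1"
    "\<And>i. i \<notin> J \<Longrightarrow> a \<le> mu i \<and> mu i \<le> b"
    using assms unfolding M_class_def by metis
  have "span (v ` J) \<subseteq> {x. M *v x = x}"
    using v(2,4) by (intro span_minimal)
      (auto simp: subspace_def matrix_vector_right_distrib matrix_vector_mult_scaleR)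
  then show "\<And>s. s \<in> S \<Longrightarrow> M *v s = s"
    using v(3) by auto
  fix w \<mu> assume w: "w \<in> orthogonal_comp S" "w \<noteq> 0" "M *v w = \<mu> *\<^sub>R w"
  \<comment> \<open>otherwise w would be orthogonal to every eigenvector v i\<close>
  have "\<exists>i. i \<notin> J \<and> \<mu> = mu i"
  proof (rule ccontr)
    assume no_match: "\<not> (\<exists>i. i \<notin> J \<and> \<mu> = mu i)"
    have "w \<bullet> v i = 0" for i
    proof (cases "i \<in> J")
      case True
      then have "v i \<in> S"
        using v(3) span_base[of "v i" "v ` J"] by simp
      then show ?thesis
        using orthogonal_comp_inner(2)[OF _ w(1)] by blast
    next
      case False
      have "\<mu> * (w \<bullet> v i) = mu i * (w \<bullet> v i)"
        using symmetric_matrix_self_adjoint[OF sym, of w "v i"] w(3) v(2)[of i] by simp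
      then show ?thesis
        using no_match False by auto
    qed
    then have "span (range v) \<subseteq> {x. w \<bullet> x = 0}"
      by (intro span_minimal) (auto simp: subspace_hyperplane)
    then have "w \<bullet> w = 0"
      using v(1) by blast
    then show False
      using w(2) by simp
  qed
  then show "a \<le> \<mu> \<and> \<mu> \<le> b"
    using v(5) by blast
qed

lemma M_class_of_eigenbasis:
  fixes S :: "(real^'n) set" and M :: "real^'n^'n"
  assumes sym: "transpose M = M"
    and U: "independent U" "span U = UNIV" and ev: "\<And>u. u \<in> U \<Longrightarrow> M *v u = ev u *\<^sub>R u"
    and BS: "BS \<subseteq> U" "card BS = dim S" "independent BS" "span BS = S"
    and ev_BS: "\<And>u. u \<in> BS \<Longrightarrow> ev u = 1"
    and ev_bounds: "\<And>u. u \<in> U - BS \<Longrightarrow> a \<le> ev u \<and> ev u \<le> b"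
  shows "M_class S a b M"
proof -
  have "card U = CARD('n)"
    using basis_card_eq_dim[of U UNIV] U by simp
  then obtain h :: "'n \<Rightarrow> real^'n" where h: "bij_betw h UNIV U"
    using finite_same_card_bij[of "UNIV :: 'n set" U] independent_imp_finite[OF U(1)] by auto
  define J where "J = {i. h i \<in> BS}"
  have hJ: "h ` J = BS"
    using bij_betw_imp_surj_on[OF h] BS(1) unfolding J_def by force
  have "inj h" "independent (range h)" "span (range h) = UNIV"
    using h U by (auto simp: bij_betw_def)
  moreover have "card J = dim S" "independent (h ` J)" "span (h ` J) = S"
    using card_image[of h J] bij_betw_imp_inj_on[OF h] BS(2,3,4) hJ by (simp_all add: inj_on_subset)
  moreover have "\<forall>i. M *v h i = (ev \<circ> h) i *\<^sub>R h i"
    using ev bij_betw_apply[OF h] by simp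
  moreover have "\<forall>i\<in>J. (ev \<circ> h) i = 1" "\<forall>i. i \<notin> J \<longrightarrow> a \<le> (ev \<circ> h) i \<and> (ev \<circ> h) i \<le> b"
    using ev_BS ev_bounds bij_betw_apply[OF h] unfolding J_def by auto
  ultimately show ?thesis
    unfolding M_class_def using sym by blast
qed

lemma M_classI:
  fixes S :: "(real^'n) set" and M :: "real^'n^'n"
  assumes S: "subspace S" and sym: "transpose M = M" and fixes_S: "\<And>s. s \<in> S \<Longrightarrow> M *v s = s"
    and eig: "\<And>w \<mu>. w \<in> orthogonal_comp S \<Longrightarrow> w \<noteq> 0 \<Longrightarrow> M *v w = \<mu> *\<^sub>R w \<Longrightarrow> a \<le> \<mu> \<and> \<mu> \<le> b"
  shows "M_class S a b M"
proof -
  note adj = symmetric_matrix_self_adjoint[OF sym]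
  obtain BS where BS: "BS \<subseteq> S" "pairwise orthogonal BS" "\<And>x. x \<in> BS \<Longrightarrow> norm x = 1"
    "independent BS" "card BS = dim S" "span BS = S"
    using orthonormal_basis_subspace[OF S] by blast
  have inv: "(*v) M ` orthogonal_comp S \<subseteq> orthogonal_comp S"
    using fixes_S by (intro self_adjoint_orthogonal_comp_invariant[OF adj]) auto
  obtain BW where BW: "BW \<subseteq> orthogonal_comp S" "pairwise orthogonal BW" "0 \<notin> BW"
    "span BW = orthogonal_comp S" "\<forall>w\<in>BW. \<exists>\<mu>. M *v w = \<mu> *\<^sub>R w"
    using self_adjoint_orthogonal_eigenbasis[OF matrix_vector_mul_linear adj
        subspace_orthogonal_comp inv] by auto
  define U where "U = BS \<union> BW"
  have U0: "0 \<notin> U"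
    using BS(3)[of 0] BW(3) unfolding U_def by auto
  have U_orth: "pairwise orthogonal U" and U_span: "span U = UNIV"
    unfolding U_def using orthogonal_basis_Un_orthogonal_comp[OF S BS(1,2,6) BW(1,2,4)] by auto
  have "\<forall>u\<in>U. \<exists>\<mu>. M *v u = \<mu> *\<^sub>R u"
    using fixes_S BS(1) BW(5) unfolding U_def by (metis Un_iff scaleR_one subsetD)
  then obtain ev where ev: "\<And>u. u \<in> U \<Longrightarrow> M *v u = ev u *\<^sub>R u"
    by metis
  show ?thesis
  proof (rule M_class_of_eigenbasis[OF sym pairwise_orthogonal_independent[OF U_orth U0] U_span ev
        _ BS(5,4,6)])
    show "BS \<subseteq> U"
      unfolding U_def by blast
    show "ev u = 1" if "u \<in> BS" for u
      using ev[of u] fixes_S[of u] that BS(1) U0 unfolding U_def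
      by (metis UnI1 scaleR_cancel_right scaleR_one subsetD)
    show "a \<le> ev u \<and> ev u \<le> b" if "u \<in> U - BS" for u
      using eig[of u] ev[of u] that BW(1) U0 unfolding U_def by blast
  qed
qed

section \<open>Interpolation\<close>

lemma range_transpose_subset_range_symmetric:
  fixes G :: "real^'k^'k" and Y :: "real^'k^'n"
  assumes sym: "transpose G = G" and ker: "\<And>v. G *v v = 0 \<Longrightarrow> Y *v v = 0"
  shows "transpose Y *v w \<in> range ((*v) G)"
proof -
  have "(*v) G -` {0} = orthogonal_comp (range ((*v) G))"
    using ker_orthogonal_comp_adjoint[OF matrix_vector_mul_linear[of G]] sym
    by (simp add: adjoint_matrix)
  then have range_G: "range ((*v) G) = orthogonal_comp ((*v) G -` {0})"
    using orthogonal_comp_self[OF linear_subspace_image[OF matrix_vector_mul_linear subspace_UNIV]]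
    by metis
  have "v \<bullet> (transpose Y *v w) = 0" if "G *v v = 0" for v
    using inner_matrix_vector_transpose[of Y v w] ker[OF that] by simp
  then show ?thesis
    unfolding range_G by (auto simp: orthogonal_comp_def orthogonal_def)
qed

lemma symmetric_matrix_right_inverse_on_transpose:
  fixes G :: "real^'k^'k" and Y :: "real^'k^'n"
  assumes sym: "transpose G = G" and ker: "\<And>v. G *v v = 0 \<Longrightarrow> Y *v v = 0"
  obtains C where "G ** C ** transpose Y = transpose Y"
proof -
  obtain g where g: "linear g" "\<And>y. y \<in> range ((*v) G) \<Longrightarrow> G *v g y = y"
    using linear_exists_right_inverse_on[OF matrix_vector_mul_linear[of G] subspace_UNIV] by auto
  have "(G ** matrix g ** transpose Y) *v x = transpose Y *v x" for x
    using g(2)[OF range_transpose_subset_range_symmetric[OF sym ker]]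
    by (simp add: matrix_vector_mul_assoc[symmetric] fun_cong[OF matrix_vector_mul(2)[OF g(1)]])
  then show ?thesis
    using that unfolding matrix_eq by blast
qed

lemma inner_le_inner_self:
  fixes x t :: "'a::real_inner"
  assumes "t \<bullet> t \<le> x \<bullet> t"
  shows "x \<bullet> t \<le> x \<bullet> x"
proof -
  have "0 \<le> (x - t) \<bullet> (x - t)"
    by simp
  also have "\<dots> = x \<bullet> x - 2 * (x \<bullet> t) + t \<bullet> t"
    by (simp add: inner_diff_left inner_diff_right inner_commute)
  finally show ?thesis
    using assms by linarith
qed

lemma symmetric_contraction_interpolant:
  fixes P Y :: "real^'k^'n"
  assumes sym: "transpose P ** Y = transpose Y ** P"
    and dom: "\<And>u. (Y *v u) \<bullet> (Y *v u) \<le> (P *v u) \<bullet> (Y *v u)"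
  obtains Q :: "real^'n^'n"
  where "transpose Q = Q" "\<And>x. 0 \<le> x \<bullet> (Q *v x)" "\<And>x. x \<bullet> (Q *v x) \<le> x \<bullet> x"
    "Q ** P = Y" "\<And>x. transpose Y *v x = 0 \<Longrightarrow> Q *v x = 0"
proof -
  define G where "G = transpose P ** Y"
  have G_sym: "transpose G = G"
    unfolding G_def using sym by (simp add: matrix_transpose_mul)
  have G_dom: "(Y *v u) \<bullet> (Y *v u) \<le> u \<bullet> (G *v u)" for u
    unfolding G_def inner_transpose_matrix_mult using dom .
  have ker: "Y *v v = 0" if "G *v v = 0" for v
    using G_dom[of v] that by (metis inner_eq_zero_iff inner_ge_zero inner_zero_right order_antisym)
  obtain C where GC: "G ** C ** transpose Y = transpose Y"
    using symmetric_matrix_right_inverse_on_transpose[OF G_sym ker] .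
  define z where "z x = C *v (transpose Y *v x)" for x
  have Gz: "G *v z x = transpose Y *v x" for x
    unfolding z_def by (metis GC matrix_vector_mul_assoc)
  define Q where "Q = Y ** C ** transpose Y"
  have Qx: "Q *v x = Y *v z x" for x
    unfolding Q_def z_def
    by (simp add: matrix_vector_mul_assoc matrix_mul_assoc del: transpose_matrix_vector)
  have Q_inner: "x \<bullet> (Q *v y) = z x \<bullet> (G *v z y)" for x y
  proof -
    have "x \<bullet> (Q *v y) = z y \<bullet> (transpose Y *v x)"
      unfolding Qx by (metis inner_commute inner_matrix_vector_transpose)
    also have "\<dots> = (G *v z y) \<bullet> z x"
      unfolding Gz[symmetric] by (rule symmetric_matrix_self_adjoint[OF G_sym, symmetric])
    finally show ?thesis
      by (simp add: inner_commute)
  qed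
  show ?thesis
  proof
    show "transpose Q = Q"
      unfolding symmetric_matrix_iff_inner
      by (metis Q_inner inner_commute symmetric_matrix_self_adjoint[OF G_sym])
    fix x
    have "(Y *v z x) \<bullet> (Y *v z x) \<le> x \<bullet> (Y *v z x)"
      using G_dom[of "z x"] unfolding Q_inner[symmetric] Qx .
    then show "0 \<le> x \<bullet> (Q *v x)" "x \<bullet> (Q *v x) \<le> x \<bullet> x"
      unfolding Qx using inner_ge_zero order_trans inner_le_inner_self by blast+
    show "transpose Y *v x = 0 \<Longrightarrow> Q *v x = 0"
      by (simp add: Qx z_def)
  next
    have "G *v (z (P *v u) - u) = 0" for u
      using Gz[of "P *v u"] sym unfolding G_def
      by (simp add: matrix_vector_mul_assoc matrix_vector_mult_diff_distrib)
    then have "Y *v (z (P *v u) - u) = 0" for u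
      by (rule ker)
    then have "Q *v (P *v u) = Y *v u" for u
      unfolding Qx by (simp add: matrix_vector_mult_diff_distrib)
    then show "Q ** P = Y"
      by (simp add: matrix_eq matrix_vector_mul_assoc)
  qed
qed

lemma scaled_difference_dominated:
  fixes p r :: "'a::real_inner"
  assumes "a < b" and neg: "(r - a *\<^sub>R p) \<bullet> (r - b *\<^sub>R p) \<le> 0"
  defines "y \<equiv> (1 / (b - a)) *\<^sub>R (r - a *\<^sub>R p)"
  shows "y \<bullet> y \<le> p \<bullet> y"
proof -
  have y_a: "r - a *\<^sub>R p = (b - a) *\<^sub>R y"
    using \<open>a < b\<close> by (simp add: y_def)
  have "r - b *\<^sub>R p = (r - a *\<^sub>R p) - (b - a) *\<^sub>R p"
    by (simp add: algebra_simps)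
  then have y_b: "r - b *\<^sub>R p = (b - a) *\<^sub>R (y - p)"
    unfolding y_a by (simp add: scaleR_diff_right)
  have "(b - a)\<^sup>2 * (y \<bullet> (y - p)) \<le> 0"
    using neg unfolding y_a y_b by (simp add: power2_eq_square)
  then show ?thesis
    using \<open>a < b\<close> by (simp add: mult_le_0_iff inner_diff_right inner_commute)
qed

lemma orthogonal_comp_contraction_interpolant:
  fixes S :: "(real^'n) set" and P R :: "real^'k^'n"
  assumes "a \<le> b"
    and P_comp: "\<And>u. P *v u \<in> orthogonal_comp S" and R_comp: "\<And>u. R *v u \<in> orthogonal_comp S"
    and sym: "transpose P ** R = transpose R ** P"
    and neg: "\<And>u. (R *v u - a *\<^sub>R (P *v u)) \<bullet> (R *v u - b *\<^sub>R (P *v u)) \<le> 0"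
  obtains Q :: "real^'n^'n"
  where "transpose Q = Q" "\<And>x. 0 \<le> x \<bullet> (Q *v x)" "\<And>x. x \<bullet> (Q *v x) \<le> x \<bullet> x"
    "\<And>s. s \<in> S \<Longrightarrow> Q *v s = 0" "(b - a) *\<^sub>R (Q ** P) = R - a *\<^sub>R P"
proof (cases "a = b")
  case True
  have "(R *v u - a *\<^sub>R (P *v u)) \<bullet> (R *v u - a *\<^sub>R (P *v u)) \<le> 0" for u
    using neg[of u] True by simp
  then have "(R - a *\<^sub>R P) *v u = 0" for u
    by (metis inner_eq_zero_iff inner_ge_zero order_antisym matrix_vector_mult_diff_rdistrib
        scaleR_matrix_vector_assoc)
  then have "R - a *\<^sub>R P = 0"
    by (simp add: matrix_eq)
  with True show ?thesis
    by (intro that[of 0]) (simp_all add: transpose_def vec_eq_iff)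
next
  case False
  with \<open>a \<le> b\<close> have "a < b"
    by simp
  define Y where "Y = (1 / (b - a)) *\<^sub>R (R - a *\<^sub>R P)"
  have Yu: "Y *v u = (1 / (b - a)) *\<^sub>R (R *v u - a *\<^sub>R (P *v u))" for u
    unfolding Y_def
    by (simp add: matrix_vector_mult_diff_rdistrib scaleR_matrix_vector_assoc[symmetric])
  have "transpose P ** Y = transpose Y ** P"
    using sym unfolding transpose_mult_symmetric_iff Yu
    by (simp add: inner_diff_right inner_diff_left inner_commute)
  moreover have "(Y *v u) \<bullet> (Y *v u) \<le> (P *v u) \<bullet> (Y *v u)" for u
    unfolding Yu using scaled_difference_dominated[OF \<open>a < b\<close> neg] .
  ultimately obtain Q where Q: "transpose Q = Q" "\<And>x. 0 \<le> x \<bullet> (Q *v x)" "\<And>x. x \<bullet> (Q *v x) \<le> x \<bullet> x"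
    "Q ** P = Y" "\<And>x. transpose Y *v x = 0 \<Longrightarrow> Q *v x = 0"
    using symmetric_contraction_interpolant by blast
  have "Y *v u \<in> orthogonal_comp S" for u
    unfolding Yu using P_comp R_comp
    by (simp add: subspace_diff subspace_scale subspace_orthogonal_comp)
  then have "Q *v s = 0" if "s \<in> S" for s
    using Q(5) transpose_matrix_vector_orthogonal_comp that by blast
  with Q show ?thesis
    using \<open>a < b\<close> by (intro that[of Q]) (simp_all add: Y_def)
qed

lemma M_class_from_contraction:
  fixes S :: "(real^'n) set" and Q :: "real^'n^'n"
  assumes S: "subspace S" and "a \<le> b" and Q_sym: "transpose Q = Q"
    and Q_bounds: "\<And>x. 0 \<le> x \<bullet> (Q *v x)" "\<And>x. x \<bullet> (Q *v x) \<le> x \<bullet> x"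
    and Q_S: "\<And>s. s \<in> S \<Longrightarrow> Q *v s = 0"
  obtains T where "M_class S a b T"
    "\<And>x. T *v x = orth_proj S x + a *\<^sub>R (x - orth_proj S x) + (b - a) *\<^sub>R (Q *v x)"
proof
  define Proj where "Proj = matrix (orth_proj S)"
  have Proj: "Proj *v x = orth_proj S x" for x
    unfolding Proj_def using matrix_vector_mul(2)[OF linear_orth_proj[OF S]] by metis
  define T where "T = Proj + a *\<^sub>R (mat 1 - Proj) + (b - a) *\<^sub>R Q"
  show T: "T *v x = orth_proj S x + a *\<^sub>R (x - orth_proj S x) + (b - a) *\<^sub>R (Q *v x)" for x
    by (simp add: T_def Proj matrix_vector_mult_add_rdistrib matrix_vector_mult_diff_rdistrib
        scaleR_matrix_vector_assoc[symmetric])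
  show "M_class S a b T"
  proof (rule M_classI[OF S])
    show "transpose T = T"
      unfolding symmetric_matrix_iff_inner T
      by (simp add: inner_add_left inner_add_right inner_diff_left inner_diff_right
          orth_proj_self_adjoint[OF S] symmetric_matrix_self_adjoint[OF Q_sym])
    show "T *v s = s" if "s \<in> S" for s
      using that by (simp add: T orth_proj_id[OF S] Q_S)
    fix w \<mu> assume w: "w \<in> orthogonal_comp S" "w \<noteq> 0" "T *v w = \<mu> *\<^sub>R w"
    have "\<mu> * (w \<bullet> w) = w \<bullet> (T *v w)"
      using w(3) by simp
    also have "\<dots> = a * (w \<bullet> w) + (b - a) * (w \<bullet> (Q *v w))"
      using w(1) by (simp add: T orth_proj_orthogonal_comp[OF S] inner_add_right)
    finally have "(\<mu> - a) * (w \<bullet> w) = (b - a) * (w \<bullet> (Q *v w))"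
      by (simp add: algebra_simps)
    moreover have "0 \<le> (b - a) * (w \<bullet> (Q *v w))" "(b - a) * (w \<bullet> (Q *v w)) \<le> (b - a) * (w \<bullet> w)"
      using \<open>a \<le> b\<close> Q_bounds by (simp_all add: mult_left_mono)
    moreover have "w \<bullet> w > 0"
      using w(2) by simp
    ultimately show "a \<le> \<mu> \<and> \<mu> \<le> b"
      by (smt (verit) mult_le_cancel_right zero_le_mult_iff)
  qed
qed

lemma interpolable_imp_conditions:
  fixes S :: "(real^'n) set" and X Y :: "real^'k^'n"
  assumes S: "subspace S" and "interpolable S a b X Y"
  defines "P \<equiv> X - proj_cols S X" and "R \<equiv> Y - proj_cols S Y"
  shows "proj_cols S X = proj_cols S Y"
    and "neg_semidef (transpose (R - a *\<^sub>R P) ** (R - b *\<^sub>R P))"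
    and "transpose P ** R = transpose R ** P"
proof -
  obtain M where M: "M_class S a b M" and Y: "Y = M ** X"
    using assms(2) unfolding interpolable_def columns_eq_iff_matrix_mult by blast
  note adj = symmetric_matrix_self_adjoint[OF M_class_symmetric[OF M]]
  note fixes_S = M_class_fixes[OF M]
  have inv: "(*v) M ` orthogonal_comp S \<subseteq> orthogonal_comp S"
    using fixes_S by (intro self_adjoint_orthogonal_comp_invariant[OF adj]) auto
  have P_comp: "P *v u \<in> orthogonal_comp S" and Pu: "P *v u = X *v u - orth_proj S (X *v u)" for u
    using orth_proj_mem(2)[OF S]
    by (simp_all add: P_def matrix_vector_mult_diff_rdistrib matrix_vector_mult_proj_cols[OF S])
  have M_residual: "M *v x - orth_proj S x = M *v (x - orth_proj S x)" for x
    using fixes_S[OF orth_proj_mem(1)[OF S]] by (simp add: matrix_vector_mult_diff_distrib)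
  have proj_M: "orth_proj S (M *v x) = orth_proj S x" for x
  proof (rule orth_proj_eqI[OF S orth_proj_mem(1)[OF S]])
    show "M *v x - orth_proj S x \<in> orthogonal_comp S"
      unfolding M_residual using inv orth_proj_mem(2)[OF S] by blast
  qed
  show "proj_cols S X = proj_cols S Y"
    by (simp add: matrix_eq matrix_vector_mult_proj_cols[OF S] Y matrix_vector_mul_assoc[symmetric]
        proj_M)
  have Ru: "R *v u = M *v (P *v u)" for u
    by (simp add: R_def Pu Y matrix_vector_mult_diff_rdistrib matrix_vector_mult_proj_cols[OF S]
        matrix_vector_mul_assoc[symmetric] proj_M M_residual)
  have "(M *v w - a *\<^sub>R w) \<bullet> (M *v w - b *\<^sub>R w) \<le> 0" if "w \<in> orthogonal_comp S" for w
    using self_adjoint_quadratic_nonpos[OF matrix_vector_mul_linear adj subspace_orthogonal_comp inv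
        M_class_eigenvalue_bounds[OF M] that] .
  then show "neg_semidef (transpose (R - a *\<^sub>R P) ** (R - b *\<^sub>R P))"
    unfolding neg_semidef_transpose_mult_iff
    by (simp add: matrix_vector_mult_diff_rdistrib scaleR_matrix_vector_assoc[symmetric] Ru P_comp)
  show "transpose P ** R = transpose R ** P"
    unfolding transpose_mult_symmetric_iff Ru by (metis adj inner_commute)
qed

lemma conditions_imp_interpolable:
  fixes S :: "(real^'n) set" and X Y :: "real^'k^'n"
  assumes S: "subspace S" and "a \<le> b"
  defines "P \<equiv> X - proj_cols S X" and "R \<equiv> Y - proj_cols S Y"
  assumes proj_eq: "proj_cols S X = proj_cols S Y"
    and neg: "neg_semidef (transpose (R - a *\<^sub>R P) ** (R - b *\<^sub>R P))"
    and sym: "transpose P ** R = transpose R ** P"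
  shows "interpolable S a b X Y"
proof -
  have Pu: "P *v u = X *v u - orth_proj S (X *v u)"
    and Ru: "R *v u = Y *v u - orth_proj S (X *v u)" for u
    by (simp_all add: P_def R_def matrix_vector_mult_diff_rdistrib matrix_vector_mult_proj_cols[OF S]
        proj_eq[symmetric])
  have P_comp: "P *v u \<in> orthogonal_comp S" and R_comp: "R *v u \<in> orthogonal_comp S" for u
    using orth_proj_mem(2)[OF S] by (simp_all add: P_def R_def matrix_vector_mult_diff_rdistrib
        matrix_vector_mult_proj_cols[OF S])
  have "(R *v u - a *\<^sub>R (P *v u)) \<bullet> (R *v u - b *\<^sub>R (P *v u)) \<le> 0" for u
    using neg unfolding neg_semidef_transpose_mult_iff
    by (simp add: matrix_vector_mult_diff_rdistrib scaleR_matrix_vector_assoc[symmetric])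
  then obtain Q where Q: "transpose Q = Q" "\<And>x. 0 \<le> x \<bullet> (Q *v x)" "\<And>x. x \<bullet> (Q *v x) \<le> x \<bullet> x"
    "\<And>s. s \<in> S \<Longrightarrow> Q *v s = 0" and QP: "(b - a) *\<^sub>R (Q ** P) = R - a *\<^sub>R P"
    using orthogonal_comp_contraction_interpolant[OF \<open>a \<le> b\<close> P_comp R_comp sym] by blast
  obtain T where T: "M_class S a b T"
    and Tx: "\<And>x. T *v x = orth_proj S x + a *\<^sub>R (x - orth_proj S x) + (b - a) *\<^sub>R (Q *v x)"
    using M_class_from_contraction[OF S \<open>a \<le> b\<close> Q] by blast
  have "Q *v (X *v u) = Q *v (P *v u)" for u
    using Q(4)[OF orth_proj_mem(1)[OF S]] by (simp add: Pu matrix_vector_mult_diff_distrib)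
  moreover have "(b - a) *\<^sub>R (Q *v (P *v u)) = R *v u - a *\<^sub>R (P *v u)" for u
    using arg_cong[OF QP, of "\<lambda>A. A *v u"]
    by (simp add: matrix_vector_mult_diff_rdistrib scaleR_matrix_vector_assoc[symmetric]
        matrix_vector_mul_assoc)
  ultimately have "T *v (X *v u) = Y *v u" for u
    by (simp add: Tx Pu Ru)
  then have "Y = T ** X"
    by (simp add: matrix_eq matrix_vector_mul_assoc)
  then show ?thesis
    unfolding interpolable_def columns_eq_iff_matrix_mult using T by blast
qed

theorem theorem2:
  fixes S :: "(real^'n) set" and lm lp :: real and X Y :: "real^'k^'n"
  assumes "subspace S"
    and "-1 < lm" and "lm \<le> lp" and "lp < 1"
  shows "interpolable S lm lp X Y \<longleftrightarrow>
    (let Xb = proj_cols S X; Yb = proj_cols S Y; Xp = X - Xb; Yp = Y - Yb in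
       Xb = Yb \<and>
       neg_semidef (transpose (Yp - lm *\<^sub>R Xp) ** (Yp - lp *\<^sub>R Xp)) \<and>
       transpose Xp ** Yp = transpose Yp ** Xp)"
  unfolding Let_def
  using interpolable_imp_conditions[OF assms(1)] conditions_imp_interpolable[OF assms(1,3)]
  by blast

end
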